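(* If $\mathcal{O}$ is a decomposable set of upwards closed modalities, then for all sets $X,Y$ and relations $R\subseteq X\times Y$: (1) $x\,R\,y$ implies $\eta(x)\,\mathcal{O}(R)\,\eta(y)$; (2) for $t\in TTX$, $r\in TTY$, $t\,\mathcal{O}(\mathcal{O}(R))\,r$ implies $\mu t\,\mathcal{O}(R)\,\mu r$.
   Context: $\Sigma$ is a signature of effect operations with arities $\alpha^n\to\alpha$, $\mathbf{N}\times\alpha^n\to\alpha$, $\alpha^{\mathbf{N}}\to\alpha$ or $\mathbf{N}\times\alpha^{\mathbf{N}}\to\alpha$. $TX$ is the set of possibly infinite labelled trees with leaves $\bot$ or elements of $X$ and internal nodes labelled by operations (or $\sigma_m$, $m\in\mathbb{N}$) with children according to arity; $t\le t'$ iff $t$ is obtained from $t'$ by replacing subtrees with $\bot$. $\eta(x)$ is the leaf $x$; $\mu:TTX\to TX$ replaces each leaf of a tree of trees by that tree. $\mathbf{1}=\{*\}$. A set $\mathcal{O}$ of modalities is given with $[\![o]\!]\subseteq T\mathbf{1}$; upwards closed means $[\![o]\!]$ upward closed under $\le$. $t[\in P]\in T\mathbf{1}$ replaces leaves in $P$ by $*$ and other $X$-leaves by $\bot$; $o(A)=\{t\in TX\mid t[\in A]\in[\![o]\!]\}$. $R[A]=\{y\mid\exists x\in A,\ xRy\}$; $\mathcal{O}$-relator: $t\,\mathcal{O}(R)\,t'$ iff $\forall A\subseteq X\ \forall o\in\mathcal{O}$, $t\in o(A)\Rightarrow t'\in o(R[A])$. $\mathcal{T}$ is the least class of formulas containing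 $o(\top),o(\bot)$ closed under arbitrary $\bigvee,\bigwedge$, with $[\![o(\top)]\!]=o(\{*\})$, $[\![o(\bot)]\!]=o(\emptyset)$, unions/intersections; $t\trianglelefteq t'$ on $T\mathbf{1}$ iff $\forall\Phi\in\mathcal{T}$, $t\in[\![\Phi]\!]\Rightarrow t'\in[\![\Phi]\!]$; $r\preccurlyeq r'$ on $TT\mathbf{1}$ iff $\forall o\,\forall\Phi\in\mathcal{T}$, $r\in o([\![\Phi]\!])\Rightarrow r'\in o([\![\Phi]\!])$. $\mathcal{O}$ is decomposable if $r\preccurlyeq r'$ implies $\mu r\trianglelefteq\mu r'$. *)

theory Defs
  imports Main
begin

text \<open>A label l has
  arity ar l :: nat option (Some n: n children, None: countably many children,
  i.e. arity alpha^N).  Operations with a natural-number parameter (N x alpha^n etc.)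
  and the auxiliary nodes sigma_m are simply labels (op, m).  Children are indexed
  by nat; for a label of finite arity n the children with index >= n are unused and
  required to be Bot (well-formedness, predicate in_trees).\<close>

codatatype ('l, 'x) tree = Bot | Leaf 'x | Node 'l "nat \<Rightarrow> ('l, 'x) tree"

coinductive in_trees :: "('l \<Rightarrow> nat option) \<Rightarrow> 'x set \<Rightarrow> ('l, 'x) tree \<Rightarrow> bool"
  for ar :: "'l \<Rightarrow> nat option" and S :: "'x set" where
  bot: "in_trees ar S Bot"
| leaf: "x \<in> S \<Longrightarrow> in_trees ar S (Leaf x)"
| node: "(\<And>i. in_trees ar S (ts i)) \<Longrightarrow> (\<And>n i. ar l = Some n \<Longrightarrow> n \<le> i \<Longrightarrow> ts i = Bot)
         \<Longrightarrow> in_trees ar S (Node l ts)"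

definition trees :: "('l \<Rightarrow> nat option) \<Rightarrow> 'x set \<Rightarrow> ('l, 'x) tree set" where
  "trees ar S = {t. in_trees ar S t}"

text \<open>Monad structure: eta is Leaf; bind substitutes leaves; mu = bind id.\<close>
primcorec tbind :: "('l, 'x) tree \<Rightarrow> ('x \<Rightarrow> ('l, 'y) tree) \<Rightarrow> ('l, 'y) tree" where
  "tbind t f = (case t of
      Bot \<Rightarrow> Bot
    | Leaf x \<Rightarrow> (case f x of Bot \<Rightarrow> Bot | Leaf y \<Rightarrow> Leaf y | Node l us \<Rightarrow> Node l us)
    | Node l ts \<Rightarrow> Node l (\<lambda>i. tbind (ts i) f))"

definition tmu :: "('l, ('l, 'x) tree) tree \<Rightarrow> ('l, 'x) tree" where
  "tmu t = tbind t id"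

coinductive tle :: "('l, 'x) tree \<Rightarrow> ('l, 'x) tree \<Rightarrow> bool" where
  "tle Bot t"
| "tle (Leaf x) (Leaf x)"
| "(\<And>i. tle (ts i) (us i)) \<Longrightarrow> tle (Node l ts) (Node l us)"

definition leafsub :: "'x set \<Rightarrow> ('l, 'x) tree \<Rightarrow> ('l, unit) tree" where
  "leafsub P t = tbind t (\<lambda>x. if x \<in> P then Leaf () else Bot)"

definition modal :: "('l \<Rightarrow> nat option) \<Rightarrow> ('o \<Rightarrow> ('l, unit) tree set) \<Rightarrow> 'x set \<Rightarrow> 'o
                     \<Rightarrow> 'x set \<Rightarrow> ('l, 'x) tree set" where
  "modal ar sem X m A = {t \<in> trees ar X. leafsub A t \<in> sem m}"

definition orel :: "('l \<Rightarrow> nat option) \<Rightarrow> ('o \<Rightarrow> ('l, unit) tree set) \<Rightarrow> 'o set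
                    \<Rightarrow> 'x set \<Rightarrow> 'y set \<Rightarrow> ('x \<times> 'y) set \<Rightarrow> (('l, 'x) tree \<times> ('l, 'y) tree) set" where
  "orel ar sem Ops X Y R = {(t, t'). t \<in> trees ar X \<and> t' \<in> trees ar Y \<and>
     (\<forall>A \<subseteq> X. \<forall>m \<in> Ops. t \<in> modal ar sem X m A \<longrightarrow> t' \<in> modal ar sem Y m (R `` A))}"

definition upclosed :: "('l \<Rightarrow> nat option) \<Rightarrow> ('l, unit) tree set \<Rightarrow> bool" where
  "upclosed ar P \<longleftrightarrow> (\<forall>t \<in> P. \<forall>t' \<in> trees ar UNIV. tle t t' \<longrightarrow> t' \<in> P)"

text \<open>Denotations of the infinitary formulas in the class \<T> (subsets of T 1).\<close>
inductive_set tsem :: "('l \<Rightarrow> nat option) \<Rightarrow> ('o \<Rightarrow> ('l, unit) tree set) \<Rightarrow> 'o set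
                       \<Rightarrow> ('l, unit) tree set set"
  for ar sem Ops where
  top: "m \<in> Ops \<Longrightarrow> modal ar sem UNIV m {()} \<in> tsem ar sem Ops"
| bot: "m \<in> Ops \<Longrightarrow> modal ar sem UNIV m {} \<in> tsem ar sem Ops"
| disj: "\<forall>\<Phi> \<in> S. \<Phi> \<in> tsem ar sem Ops \<Longrightarrow> \<Union>S \<in> tsem ar sem Ops"
| conj: "\<forall>\<Phi> \<in> S. \<Phi> \<in> tsem ar sem Ops \<Longrightarrow> \<Inter>S \<inter> trees ar UNIV \<in> tsem ar sem Ops"

definition tleq1 :: "('l \<Rightarrow> nat option) \<Rightarrow> ('o \<Rightarrow> ('l, unit) tree set) \<Rightarrow> 'o set
                     \<Rightarrow> ('l, unit) tree \<Rightarrow> ('l, unit) tree \<Rightarrow> bool" where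
  "tleq1 ar sem Ops t t' \<longleftrightarrow> (\<forall>\<Phi> \<in> tsem ar sem Ops. t \<in> \<Phi> \<longrightarrow> t' \<in> \<Phi>)"

definition tleq2 :: "('l \<Rightarrow> nat option) \<Rightarrow> ('o \<Rightarrow> ('l, unit) tree set) \<Rightarrow> 'o set
                     \<Rightarrow> ('l, ('l, unit) tree) tree \<Rightarrow> ('l, ('l, unit) tree) tree \<Rightarrow> bool" where
  "tleq2 ar sem Ops r r' \<longleftrightarrow> (\<forall>m \<in> Ops. \<forall>\<Phi> \<in> tsem ar sem Ops.
      r \<in> modal ar sem (trees ar UNIV) m \<Phi> \<longrightarrow> r' \<in> modal ar sem (trees ar UNIV) m \<Phi>)"

definition decomposable :: "('l \<Rightarrow> nat option) \<Rightarrow> ('o \<Rightarrow> ('l, unit) tree set) \<Rightarrow> 'o set \<Rightarrow> bool" where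
  "decomposable ar sem Ops \<longleftrightarrow> (\<forall>r \<in> trees ar (trees ar UNIV). \<forall>r' \<in> trees ar (trees ar UNIV).
      tleq2 ar sem Ops r r' \<longrightarrow> tleq1 ar sem Ops (tmu r) (tmu r'))"

end

theory Submission
  imports Defs
begin

text \<open>Part (1) holds because upward closure lets a modality pass from Bot or Leaf () at x to
  the corresponding leaf at y.  For part (2), fix A and compare the trees of trees
  T(-[\<in>A]) t and T(-[\<in>R[A]]) r
  (the functor action T h is map_tree id h).  Every formula \<Phi> of \<T> is transported along O(R)
  (induction on \<Phi>), so the O(O(R))-relatedness of t and r makes these two trees
  \<preccurlyeq>-related; decomposability then gives \<unlhd> for their multiplications, which are
  (\<mu> t)[\<in>A] and (\<mu> r)[\<in>R[A]], and testing \<unlhd> with the formula o(\<top>) yields the claim.\<close>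

lemma tbind_Bot [simp]: "tbind Bot f = Bot"
  by (subst tbind.code) simp

lemma tbind_Leaf [simp]: "tbind (Leaf x) f = f x"
  by (subst tbind.code) (simp split: tree.split)

lemma tbind_Node [simp]: "tbind (Node l ts) f = Node l (\<lambda>i. tbind (ts i) f)"
  by (subst tbind.code) simp

lemma tbind_assoc: "tbind (tbind t f) g = tbind t (\<lambda>x. tbind (f x) g)"
proof (coinduction arbitrary: t rule: tree.coinduct_strong)
  case (Eq_tree t)
  show ?case
  proof (cases t)
    case (Leaf x)
    then show ?thesis by (cases "tbind (f x) g") (auto simp: rel_fun_def)
  qed (auto simp: rel_fun_def)
qed

lemma map_tree_eq_tbind: "map_tree id h t = tbind t (Leaf \<circ> h)"
proof (coinduction arbitrary: t rule: tree.coinduct_strong)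
  case (Eq_tree t)
  show ?case by (cases t) (auto simp: rel_fun_def tree.map)
qed

lemma tbind_map_tree: "tbind (map_tree id h t) f = tbind t (f \<circ> h)"
  by (simp add: map_tree_eq_tbind tbind_assoc comp_def)

lemma tbind_cong_in_trees:
  "in_trees ar S t \<Longrightarrow> (\<And>x. x \<in> S \<Longrightarrow> f x = g x) \<Longrightarrow> tbind t f = tbind t g"
proof (coinduction arbitrary: t rule: tree.coinduct_strong)
  case (Eq_tree t)
  then show ?case
    by (cases t) (auto simp: rel_fun_def elim: in_trees.cases)
qed

lemma in_trees_tbind:
  "in_trees ar S t \<Longrightarrow> (\<And>x. x \<in> S \<Longrightarrow> in_trees ar S' (f x)) \<Longrightarrow> in_trees ar S' (tbind t f)"
proof (coinduction arbitrary: t rule: in_trees.coinduct)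
  case in_trees
  show ?case
  proof (cases t)
    case (Leaf x)
    with in_trees have "in_trees ar S' (f x)" by (auto elim: in_trees.cases)
    with Leaf show ?thesis by (auto elim: in_trees.cases)
  qed (use in_trees in \<open>auto elim: in_trees.cases\<close>)
qed

lemma in_trees_map_tree:
  "in_trees ar S t \<Longrightarrow> (\<And>x. x \<in> S \<Longrightarrow> h x \<in> S') \<Longrightarrow> in_trees ar S' (map_tree id h t)"
  unfolding map_tree_eq_tbind by (erule in_trees_tbind) (auto intro: in_trees.leaf)

lemma tmu_in_trees: "t \<in> trees ar (trees ar S) \<Longrightarrow> tmu t \<in> trees ar S"
  unfolding trees_def tmu_def by (auto intro: in_trees_tbind)

lemma in_trees_leafsub: "in_trees ar S t \<Longrightarrow> in_trees ar UNIV (leafsub A t)"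
  unfolding leafsub_def by (erule in_trees_tbind) (auto intro: in_trees.intros)

lemma leafsub_mono: "A \<subseteq> B \<Longrightarrow> tle (leafsub A t) (leafsub B t)"
  unfolding leafsub_def
proof (coinduction arbitrary: t rule: tle.coinduct)
  case tle
  then show ?case by (cases t) auto
qed

lemma leafsub_unit: "leafsub {()} u = u"
proof -
  have "tbind u Leaf = u"
  proof (coinduction arbitrary: u rule: tree.coinduct_strong)
    case (Eq_tree u)
    show ?case by (cases u) (auto simp: rel_fun_def)
  qed
  moreover have "(\<lambda>x::unit. if x \<in> {()} then Leaf () else Bot) = Leaf" by auto
  ultimately show ?thesis unfolding leafsub_def by simp
qed

lemma leafsub_leafsub_empty: "leafsub {} (leafsub A t) = leafsub {} t"
  unfolding leafsub_def tbind_assoc by (rule arg_cong[where f = "tbind t"]) auto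

lemma leafsub_inter_in_trees: "in_trees ar S t \<Longrightarrow> leafsub (A \<inter> S) t = leafsub A t"
  unfolding leafsub_def by (erule tbind_cong_in_trees) auto

lemma leafsub_map_tree: "leafsub A (map_tree id h t) = leafsub (h -` A) t"
  unfolding leafsub_def tbind_map_tree by (simp add: comp_def)

lemma leafsub_tmu: "leafsub A (tmu t) = tmu (map_tree id (leafsub A) t)"
  unfolding tmu_def leafsub_def by (simp add: tbind_assoc tbind_map_tree comp_def)

lemma modal_transfer:
  assumes "upclosed ar (sem m)" and "t \<in> modal ar sem X m A" and "t' \<in> trees ar Y"
    and "tle (leafsub A t) (leafsub B t')"
  shows "t' \<in> modal ar sem Y m B"
proof -
  have "leafsub B t' \<in> trees ar UNIV"
    using \<open>t' \<in> trees ar Y\<close> by (simp add: trees_def in_trees_leafsub)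
  with assms show ?thesis by (auto simp: modal_def upclosed_def)
qed

lemma orelD:
  "(t, t') \<in> orel ar sem Ops X Y R \<Longrightarrow> A \<subseteq> X \<Longrightarrow> m \<in> Ops \<Longrightarrow> t \<in> modal ar sem X m A
    \<Longrightarrow> t' \<in> modal ar sem Y m (R `` A)"
  by (auto simp: orel_def)

lemma Leaf_Leaf_in_orel:
  assumes up: "\<forall>m \<in> Ops. upclosed ar (sem m)" and "(x, y) \<in> R" and "x \<in> X" "y \<in> Y"
  shows "(Leaf x, Leaf y) \<in> orel ar sem Ops X Y R"
proof -
  have "tle (leafsub A (Leaf x)) (leafsub (R `` A) (Leaf y))" for A
    using \<open>(x, y) \<in> R\<close> by (auto simp: leafsub_def intro: tle.intros)
  moreover have "Leaf x \<in> trees ar X" "Leaf y \<in> trees ar Y"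
    using \<open>x \<in> X\<close> \<open>y \<in> Y\<close> by (auto simp: trees_def intro: in_trees.leaf)
  ultimately show ?thesis
    using up by (auto simp: orel_def intro: modal_transfer)
qed

lemma orel_transfers_tsem:
  assumes "\<Phi> \<in> tsem ar sem Ops"
  shows "(s, s') \<in> orel ar sem Ops X Y R \<Longrightarrow> A \<subseteq> X \<Longrightarrow> leafsub A s \<in> \<Phi>
    \<Longrightarrow> leafsub (R `` A) s' \<in> \<Phi>"
  using assms
proof (induction arbitrary: s s' rule: tsem.induct)
  case (top m)
  then have "s \<in> modal ar sem X m A"
    by (auto simp: orel_def modal_def leafsub_unit)
  with top have "s' \<in> modal ar sem Y m (R `` A)" by (blast intro: orelD)
  then show ?case
    by (auto simp: modal_def leafsub_unit trees_def intro: in_trees_leafsub)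
next
  case (bot m)
  then have "s \<in> modal ar sem X m {}"
    by (auto simp: orel_def modal_def leafsub_leafsub_empty)
  with bot have "s' \<in> modal ar sem Y m (R `` {})" by (blast intro: orelD)
  then show ?case
    by (auto simp: modal_def leafsub_leafsub_empty trees_def intro: in_trees_leafsub)
next
  case (conj S)
  then show ?case by (auto simp: orel_def trees_def intro: in_trees_leafsub)
qed blast

lemma tleq2_map_leafsub_if_orel_orel:
  assumes up: "\<forall>m \<in> Ops. upclosed ar (sem m)" and "A \<subseteq> X"
    and t: "t \<in> trees ar (trees ar X)" and r: "r \<in> trees ar (trees ar Y)"
    and tr: "(t, r) \<in> orel ar sem Ops (trees ar X) (trees ar Y) (orel ar sem Ops X Y R)"
  shows "tleq2 ar sem Ops (map_tree id (leafsub A) t) (map_tree id (leafsub (R `` A)) r)"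
  unfolding tleq2_def
proof (intro ballI impI)
  let ?O = "orel ar sem Ops X Y R"
  fix m \<Phi>
  assume m: "m \<in> Ops" and \<Phi>: "\<Phi> \<in> tsem ar sem Ops"
    and "map_tree id (leafsub A) t \<in> modal ar sem (trees ar UNIV) m \<Phi>"
  define B where "B = leafsub A -` \<Phi> \<inter> trees ar X"
  have "leafsub B t = leafsub \<Phi> (map_tree id (leafsub A) t)"
    using t by (simp add: B_def trees_def leafsub_inter_in_trees leafsub_map_tree)
  then have "t \<in> modal ar sem (trees ar X) m B"
    using \<open>map_tree id (leafsub A) t \<in> _\<close> t by (simp add: modal_def)
  moreover have "B \<subseteq> trees ar X" by (simp add: B_def)
  ultimately have "r \<in> modal ar sem (trees ar Y) m (?O `` B)"
    using tr m by (blast intro: orelD)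
  moreover have "?O `` B \<subseteq> leafsub (R `` A) -` \<Phi>"
    using orel_transfers_tsem[OF \<Phi>] \<open>A \<subseteq> X\<close> by (auto simp: B_def)
  ultimately have "r \<in> modal ar sem (trees ar Y) m (leafsub (R `` A) -` \<Phi>)"
    using up m r by (blast intro: modal_transfer leafsub_mono)
  moreover have "map_tree id (leafsub (R `` A)) r \<in> trees ar (trees ar UNIV)"
    using r by (auto simp: trees_def intro!: in_trees_map_tree in_trees_leafsub)
  ultimately show "map_tree id (leafsub (R `` A)) r \<in> modal ar sem (trees ar UNIV) m \<Phi>"
    by (simp add: modal_def leafsub_map_tree)
qed

lemma tmu_tmu_in_orel:
  assumes up: "\<forall>m \<in> Ops. upclosed ar (sem m)" and dec: "decomposable ar sem Ops"
    and t: "t \<in> trees ar (trees ar X)" and r: "r \<in> trees ar (trees ar Y)"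
    and tr: "(t, r) \<in> orel ar sem Ops (trees ar X) (trees ar Y) (orel ar sem Ops X Y R)"
  shows "(tmu t, tmu r) \<in> orel ar sem Ops X Y R"
proof -
  have "tmu r \<in> modal ar sem Y m (R `` A)"
    if "A \<subseteq> X" "m \<in> Ops" "tmu t \<in> modal ar sem X m A" for A m
  proof -
    let ?t = "map_tree id (leafsub A) t" and ?r = "map_tree id (leafsub (R `` A)) r"
    have t': "?t \<in> trees ar (trees ar UNIV)" and r': "?r \<in> trees ar (trees ar UNIV)"
      using t r by (auto simp: trees_def intro!: in_trees_map_tree in_trees_leafsub)
    moreover have "tleq2 ar sem Ops ?t ?r"
      using up that(1) t r tr by (rule tleq2_map_leafsub_if_orel_orel)
    ultimately have "tleq1 ar sem Ops (tmu ?t) (tmu ?r)"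
      using dec by (simp add: decomposable_def)
    moreover have "tmu ?t \<in> modal ar sem UNIV m {()}"
      using that(3) tmu_in_trees[OF t'] by (simp add: modal_def leafsub_unit flip: leafsub_tmu)
    ultimately have "tmu ?r \<in> modal ar sem UNIV m {()}"
      using tsem.top[OF that(2)] by (auto simp: tleq1_def)
    then show ?thesis
      using tmu_in_trees[OF r] by (simp add: modal_def leafsub_unit flip: leafsub_tmu)
  qed
  then show ?thesis
    using tmu_in_trees[OF t] tmu_in_trees[OF r] by (auto simp: orel_def)
qed

theorem lemma5p8:
  fixes ar :: "'l \<Rightarrow> nat option"
    and sem :: "'o \<Rightarrow> ('l, unit) tree set"
    and Ops :: "'o set"
    and X :: "'x set" and Y :: "'y set" and R :: "('x \<times> 'y) set"
  assumes modalities: "\<forall>m \<in> Ops. sem m \<subseteq> trees ar UNIV"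
    and up: "\<forall>m \<in> Ops. upclosed ar (sem m)"
    and dec: "decomposable ar sem Ops"
    and R: "R \<subseteq> X \<times> Y"
  shows "(\<forall>x y. (x, y) \<in> R \<longrightarrow> (Leaf x, Leaf y) \<in> orel ar sem Ops X Y R)
    \<and> (\<forall>t r. t \<in> trees ar (trees ar X) \<longrightarrow> r \<in> trees ar (trees ar Y) \<longrightarrow>
          (t, r) \<in> orel ar sem Ops (trees ar X) (trees ar Y) (orel ar sem Ops X Y R) \<longrightarrow>
          (tmu t, tmu r) \<in> orel ar sem Ops X Y R)"
proof (intro conjI allI impI)
  fix x y
  assume xy: "(x, y) \<in> R"
  with R have "x \<in> X" "y \<in> Y" by auto
  with xy show "(Leaf x, Leaf y) \<in> orel ar sem Ops X Y R"
    by (rule Leaf_Leaf_in_orel[OF up])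
next
  fix t r
  assume "t \<in> trees ar (trees ar X)" "r \<in> trees ar (trees ar Y)"
    "(t, r) \<in> orel ar sem Ops (trees ar X) (trees ar Y) (orel ar sem Ops X Y R)"
  then show "(tmu t, tmu r) \<in> orel ar sem Ops X Y R"
    by (rule tmu_tmu_in_orel[OF up dec])
qed

end
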